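(* Fix $\delta_0>0$ and an integer $l\ge1$. There exist $k_0$ and $C>0$ (depending on $l$ and $\delta_0$) such that for all $k\ge k_0$, all $\delta\in[\delta_0,1)$, and all real numbers $b_i\in[-1,1]$ ($i\in[k]$) and $b_{ij}=b_{ji}\in[-1,1]$ ($i\ne j\in[k]$), with $E,\Delta,\alpha,\beta,S_{1,l},S_{2,l},S_{3,l},A,Q,W$ as defined in the context, we have $E>0$ and \[\Big|\tfrac{l!}{E^l}S_{1,l}-\Big(\beta(1+\Delta)^l-\tfrac{A}{E}\,l(1+\Delta)^{l-1}-\tfrac{\beta Q}{E^2}\,l(l-1)(1+\Delta)^{l-2}\Big)\Big|\le \tfrac{C}{k},\] \[\Big|\tfrac{l!}{E^l}S_{2,l}-\alpha(1+\Delta)^l\Big|\le\tfrac{C}{k},\qquad \Big|\tfrac{l!}{E^l}S_{3,l}-\tfrac{\beta W}{E}\,l(1+\Delta)^{l-1}\Big|\le\tfrac Ck.\]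
   Context: Citizens are the indices $2,\dots,k$. Define $\alpha=b_1$, $\beta=\sum_{i=2}^k b_i$, $E=\frac{\delta^2k^2}{2}-\frac k2+1$, and $\Delta$ by $\sum_{2\le i<j\le k}b_{ij}=E(1+\Delta)$. For a set $M$ of disjoint 2-element sets write $b_M=\prod_{\{p,q\}\in M}b_{pq}$. Define: $S_{1,l}=\sum b_j\,b_M$ over all citizens $j$ and all unordered collections $M$ of $l$ pairwise disjoint 2-element subsets of $\{2,\dots,k\}\setminus\{j\}$; $S_{2,l}=b_1\sum_M b_M$ over all unordered collections $M$ of $l$ pairwise disjoint 2-element subsets of $\{2,\dots,k\}$; $S_{3,l}=\sum b_j\,b_{1i}\,b_M$ over all ordered pairs of distinct citizens $(j,i)$ and all unordered collections $M$ of $l-1$ pairwise disjoint 2-element subsets of $\{2,\dots,k\}\setminus\{i,j\}$; $A=\sum_{i\ne j\in\{2,\dots,k\}}b_i b_{ij}$; $Q=\sum b_{ij}b_{ij'}$ over all citizens $i$ and unordered pairs $\{j,j'\}$ of distinct citizens different from $i$; $W=\sum_{i=2}^k b_{1i}$. *)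

theory Defs
  imports Complex_Main
begin

text \<open>Vertices are 1..k; citizens are 2..k. Pair weights bb are symmetric; a
2-element set e gets weight bb (Min e) (Max e).\<close>

definition citizens :: "nat \<Rightarrow> nat set" where
  "citizens k = {2..k}"

definition two_sets :: "nat set \<Rightarrow> nat set set" where
  "two_sets S = {e. e \<subseteq> S \<and> card e = 2}"

definition matchings :: "nat set \<Rightarrow> nat \<Rightarrow> nat set set set" where
  "matchings S l = {M. M \<subseteq> two_sets S \<and> card M = l \<and> pairwise disjnt M}"

definition ew :: "(nat \<Rightarrow> nat \<Rightarrow> real) \<Rightarrow> nat set \<Rightarrow> real" where
  "ew bb e = bb (Min e) (Max e)"

definition bM :: "(nat \<Rightarrow> nat \<Rightarrow> real) \<Rightarrow> nat set set \<Rightarrow> real" where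
  "bM bb M = (\<Prod>e\<in>M. ew bb e)"

definition Eval :: "real \<Rightarrow> nat \<Rightarrow> real" where
  "Eval \<delta> k = \<delta>^2 * real k ^ 2 / 2 - real k / 2 + 1"

definition pair_sum :: "nat \<Rightarrow> (nat \<Rightarrow> nat \<Rightarrow> real) \<Rightarrow> real" where
  "pair_sum k bb = (\<Sum>i\<in>citizens k. \<Sum>j\<in>{i<..k}. bb i j)"

definition alpha :: "(nat \<Rightarrow> real) \<Rightarrow> real" where
  "alpha b = b 1"

definition beta :: "nat \<Rightarrow> (nat \<Rightarrow> real) \<Rightarrow> real" where
  "beta k b = (\<Sum>i\<in>citizens k. b i)"

definition S1 :: "nat \<Rightarrow> nat \<Rightarrow> (nat \<Rightarrow> real) \<Rightarrow> (nat \<Rightarrow> nat \<Rightarrow> real) \<Rightarrow> real" where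
  "S1 k l b bb = (\<Sum>j\<in>citizens k. \<Sum>M\<in>matchings (citizens k - {j}) l. b j * bM bb M)"

definition S2 :: "nat \<Rightarrow> nat \<Rightarrow> (nat \<Rightarrow> real) \<Rightarrow> (nat \<Rightarrow> nat \<Rightarrow> real) \<Rightarrow> real" where
  "S2 k l b bb = b 1 * (\<Sum>M\<in>matchings (citizens k) l. bM bb M)"

definition S3 :: "nat \<Rightarrow> nat \<Rightarrow> (nat \<Rightarrow> real) \<Rightarrow> (nat \<Rightarrow> nat \<Rightarrow> real) \<Rightarrow> real" where
  "S3 k l b bb = (\<Sum>j\<in>citizens k. \<Sum>i\<in>citizens k - {j}.
      \<Sum>M\<in>matchings (citizens k - {i, j}) (l - 1). b j * bb 1 i * bM bb M)"

definition Aval :: "nat \<Rightarrow> (nat \<Rightarrow> real) \<Rightarrow> (nat \<Rightarrow> nat \<Rightarrow> real) \<Rightarrow> real" where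
  "Aval k b bb = (\<Sum>i\<in>citizens k. \<Sum>j\<in>citizens k - {i}. b i * bb i j)"

definition Qval :: "nat \<Rightarrow> (nat \<Rightarrow> nat \<Rightarrow> real) \<Rightarrow> real" where
  "Qval k bb = (\<Sum>i\<in>citizens k. \<Sum>e\<in>two_sets (citizens k - {i}). \<Prod>j\<in>e. bb i j)"

definition Wval :: "nat \<Rightarrow> (nat \<Rightarrow> nat \<Rightarrow> real) \<Rightarrow> real" where
  "Wval k bb = (\<Sum>i\<in>citizens k. bb 1 i)"

end

theory Submission
  imports Defs
begin

text \<open>
  Normalizing \<open>w {i, j} = b\<^sub>i\<^sub>j / k\<^sup>2\<close> turns every sum over \<open>l\<close>-matchings into a matching moment
  \<open>F l V = l! * (\<Sum>M. \<Prod>e\<in>M. w e)\<close>, and counting matchings with a marked edge gives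
  \<open>F (l + 1) V = (\<Sum>e. w e * F l (V - e))\<close>. As \<open>\<bar>w\<bar> \<le> 1 / k\<^sup>2\<close>, deleting at most two vertices moves
  the total weight \<open>P\<close> by \<open>O(1/k)\<close> and the degree square sum \<open>R\<close> by \<open>O(1/k\<^sup>2)\<close>, so linearizing
  \<open>P ^ l\<close> in the recursion gives by induction \<open>F l V = P ^ l - (l choose 2) * R * P ^ (l - 2) + O(1/k\<^sup>2)\<close>.
  Deleting one vertex \<open>j\<close> lowers \<open>P\<close> by its degree, and \<open>R\<close> is twice the cherry sum up to \<open>O(1/k\<^sup>2)\<close>;
  this yields the expansion of \<open>S\<^sub>1\<close>, while the cruder \<open>F l U = P ^ l + O(1/k)\<close> suffices for \<open>S\<^sub>2\<close>
  and \<open>S\<^sub>3\<close>. Finally \<open>1 + \<Delta> = (k\<^sup>2 / E) * P\<close>, and \<open>k\<^sup>2 / E \<le> 4 / \<delta>\<^sub>0\<^sup>2\<close> once \<open>k \<ge> 2 / \<delta>\<^sub>0\<^sup>2\<close>.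
\<close>

lemma finite_two_sets: "finite V \<Longrightarrow> finite (two_sets V)"
  unfolding two_sets_def by (rule finite_subset[of _ "Pow V"]) auto

lemma two_sets_mono: "U \<subseteq> V \<Longrightarrow> two_sets U \<subseteq> two_sets V"
  unfolding two_sets_def by auto

lemma doubleton_in_two_sets: "i \<in> V \<Longrightarrow> j \<in> V \<Longrightarrow> i \<noteq> j \<Longrightarrow> {i, j} \<in> two_sets V"
  by (auto simp: two_sets_def)

lemma two_sets_Min_Max:
  assumes "e \<in> two_sets V"
  shows "e = {Min e, Max e}" "Min e < Max e" "Min e \<in> V" "Max e \<in> V"
proof -
  from assms obtain a b where "e = {a, b}" "a \<noteq> b" "e \<subseteq> V"
    by (auto simp: two_sets_def card_2_iff)
  then show "e = {Min e, Max e}" "Min e < Max e" "Min e \<in> V" "Max e \<in> V"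
    by (cases "a < b"; auto simp: min_def max_def)+
qed

lemma card_two_sets_le: "finite V \<Longrightarrow> card (two_sets V) \<le> card V ^ 2"
proof -
  assume fin: "finite V"
  have "two_sets V \<subseteq> (\<lambda>(i, j). {i, j}) ` (V \<times> V)"
  proof
    fix e assume "e \<in> two_sets V"
    from two_sets_Min_Max[OF this] show "e \<in> (\<lambda>(i, j). {i, j}) ` (V \<times> V)"
      by (auto intro!: image_eqI[where x="(Min e, Max e)"])
  qed
  then have "card (two_sets V) \<le> card ((\<lambda>(i, j). {i, j}) ` (V \<times> V))"
    by (rule card_mono[rotated]) (simp add: fin)
  also have "\<dots> \<le> card (V \<times> V)" by (rule card_image_le) (simp add: fin)
  finally show ?thesis by (simp add: card_cartesian_product power2_eq_square)
qed

lemma sum_two_sets_eq_sum_pairs: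
  assumes "finite V"
  shows "(\<Sum>e\<in>two_sets V. G e) = (\<Sum>i\<in>V. \<Sum>j\<in>{j\<in>V. i < j}. G {i, j})"
proof -
  have "(\<Sum>e\<in>two_sets V. G e) = (\<Sum>(i, j)\<in>Sigma V (\<lambda>i. {j\<in>V. i < j}). G {i, j})"
  proof (rule sum.reindex_bij_witness[where i="\<lambda>(i, j). {i, j}" and j="\<lambda>e. (Min e, Max e)"])
    fix e assume "e \<in> two_sets V"
    from two_sets_Min_Max[OF this]
    show "(case (Min e, Max e) of (i, j) \<Rightarrow> {i, j}) = e"
      "(Min e, Max e) \<in> Sigma V (\<lambda>i. {j\<in>V. i < j})"
      "(case (Min e, Max e) of (i, j) \<Rightarrow> G {i, j}) = G e" by auto
  qed (auto intro: doubleton_in_two_sets)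
  also have "\<dots> = (\<Sum>i\<in>V. \<Sum>j\<in>{j\<in>V. i < j}. G {i, j})"
    by (subst sum.Sigma) (auto simp: assms)
  finally show ?thesis .
qed

lemma sum_off_diagonal_eq_sum_pairs:
  fixes H :: "nat \<Rightarrow> nat \<Rightarrow> 'a::comm_monoid_add"
  assumes "finite V"
  shows "(\<Sum>i\<in>V. \<Sum>j\<in>V - {i}. H i j) = (\<Sum>i\<in>V. \<Sum>j\<in>{j\<in>V. i < j}. H i j + H j i)"
proof -
  have "(\<Sum>j\<in>V - {i}. H i j) = (\<Sum>j\<in>{j\<in>V. i < j}. H i j) + (\<Sum>j\<in>{j\<in>V. j < i}. H i j)" for i
  proof -
    have "V - {i} = {j\<in>V. i < j} \<union> {j\<in>V. j < i}" by auto
    then show ?thesis by (metis (no_types, lifting) assms sum.union_disjoint disjoint_iff finite_Diff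
        mem_Collect_eq not_less_iff_gr_or_eq finite_Un)
  qed
  then have "(\<Sum>i\<in>V. \<Sum>j\<in>V - {i}. H i j)
      = (\<Sum>i\<in>V. \<Sum>j\<in>{j\<in>V. i < j}. H i j) + (\<Sum>i\<in>V. \<Sum>j\<in>{j\<in>V. j < i}. H i j)"
    by (simp add: sum.distrib)
  also have "(\<Sum>i\<in>V. \<Sum>j\<in>{j\<in>V. j < i}. H i j) = (\<Sum>j\<in>V. \<Sum>i\<in>{i\<in>V. j < i}. H i j)"
    using sum.swap_restrict[OF assms assms, of H "\<lambda>i j. j < i"] by simp
  finally show ?thesis by (simp add: sum.distrib)
qed

lemma square_sum_two_sets:
  fixes g :: "nat \<Rightarrow> real"
  assumes "finite S"
  shows "(\<Sum>j\<in>S. g j)\<^sup>2 = (\<Sum>j\<in>S. (g j)\<^sup>2) + 2 * (\<Sum>e\<in>two_sets S. \<Prod>j\<in>e. g j)"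
proof -
  have "(\<Sum>j\<in>S. g j)\<^sup>2 = (\<Sum>i\<in>S. (g i)\<^sup>2 + (\<Sum>j\<in>S - {i}. g i * g j))"
    unfolding power2_eq_square sum_product using assms by (simp add: sum.remove)
  also have "\<dots> = (\<Sum>j\<in>S. (g j)\<^sup>2) + (\<Sum>i\<in>S. \<Sum>j\<in>{j\<in>S. i < j}. 2 * (g i * g j))"
    by (simp add: sum.distrib sum_off_diagonal_eq_sum_pairs[OF assms] mult.commute)
  also have "(\<Sum>i\<in>S. \<Sum>j\<in>{j\<in>S. i < j}. 2 * (g i * g j)) = 2 * (\<Sum>e\<in>two_sets S. \<Prod>j\<in>e. g j)"
    by (auto simp: sum_two_sets_eq_sum_pairs[OF assms] sum_distrib_left intro!: sum.cong)
  finally show ?thesis .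
qed

section \<open>Matchings\<close>

definition matching_sum :: "(nat set \<Rightarrow> real) \<Rightarrow> nat set \<Rightarrow> nat \<Rightarrow> real" where
  "matching_sum w V l = (\<Sum>M\<in>matchings V l. \<Prod>e\<in>M. w e)"

definition matching_moment :: "(nat set \<Rightarrow> real) \<Rightarrow> nat set \<Rightarrow> nat \<Rightarrow> real" where
  "matching_moment w V l = fact l * matching_sum w V l"

lemma finite_matchings: "finite V \<Longrightarrow> finite (matchings V l)"
  unfolding matchings_def
  by (rule finite_subset[of _ "Pow (two_sets V)"]) (auto simp: finite_two_sets)

lemma finite_matching: "finite V \<Longrightarrow> M \<in> matchings V l \<Longrightarrow> finite M"
  unfolding matchings_def using finite_two_sets finite_subset by blast

lemma matchings_0: "finite V \<Longrightarrow> matchings V 0 = {{}}"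
  unfolding matchings_def by (auto dest: finite_subset[OF _ finite_two_sets])

lemma matching_remove:
  assumes "M \<in> matchings V (Suc l)" "e \<in> M" "finite V"
  shows "M - {e} \<in> matchings (V - e) l"
proof -
  have M: "M \<subseteq> two_sets V" "card M = Suc l" "pairwise disjnt M"
    using assms(1) by (auto simp: matchings_def)
  have "x \<in> two_sets (V - e)" if "x \<in> M - {e}" for x
    using that M assms(2) unfolding pairwise_def two_sets_def disjnt_def by blast
  then show ?thesis
    using M assms finite_matching[OF assms(3,1)] by (auto simp: matchings_def pairwise_def)
qed

lemma matching_insert:
  assumes "e \<in> two_sets V" "M \<in> matchings (V - e) l" "finite V"
  shows "insert e M \<in> matchings V (Suc l)" "e \<notin> M"
proof -
  have M: "M \<subseteq> two_sets (V - e)" "card M = l" "pairwise disjnt M"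
    using assms(2) by (auto simp: matchings_def)
  have "e \<noteq> {}" using assms(1) by (auto simp: two_sets_def)
  then show "e \<notin> M" using M(1) by (auto simp: two_sets_def)
  moreover have "pairwise disjnt (insert e M)"
    using M(1,3) unfolding pairwise_insert by (auto simp: two_sets_def disjnt_def)
  ultimately show "insert e M \<in> matchings V (Suc l)"
    using M assms two_sets_mono[of "V - e" V] finite_matching[OF _ assms(2)]
    by (auto simp: matchings_def)
qed

lemma matching_sum_0: "finite V \<Longrightarrow> matching_sum w V 0 = 1"
  by (simp add: matching_sum_def matchings_0)

text \<open>Counting pairs (matching, marked edge) in two ways.\<close>

lemma matching_sum_Suc:
  assumes fin: "finite V"
  shows "real (Suc l) * matching_sum w V (Suc l) = (\<Sum>e\<in>two_sets V. w e * matching_sum w (V - e) l)"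
proof -
  have card: "card M = Suc l" if "M \<in> matchings V (Suc l)" for M
    using that by (simp add: matchings_def)
  have "real (Suc l) * matching_sum w V (Suc l) = (\<Sum>M\<in>matchings V (Suc l). \<Sum>e\<in>M. \<Prod>x\<in>M. w x)"
    unfolding matching_sum_def sum_distrib_left by (intro sum.cong) (simp_all add: card)
  also have "\<dots> = (\<Sum>M\<in>matchings V (Suc l). \<Sum>e\<in>M. w e * (\<Prod>x\<in>M - {e}. w x))"
    using finite_matching[OF fin] by (intro sum.cong refl) (simp add: prod.remove)
  also have "\<dots> = (\<Sum>(M, e)\<in>Sigma (matchings V (Suc l)) (\<lambda>M. M). w e * (\<Prod>x\<in>M - {e}. w x))"
    by (subst sum.Sigma) (auto simp: finite_matchings fin intro: finite_matching[OF fin])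
  also have "\<dots> = (\<Sum>(e, M)\<in>Sigma (two_sets V) (\<lambda>e. matchings (V - e) l). w e * (\<Prod>x\<in>M. w x))"
    by (rule sum.reindex_bij_witness[where i="\<lambda>(e, M). (insert e M, e)" and j="\<lambda>(M, e). (e, M - {e})"])
      (auto simp: matching_remove matching_insert fin dest: matching_insert(2)[OF _ _ fin],
        auto simp: matchings_def)
  also have "\<dots> = (\<Sum>e\<in>two_sets V. w e * matching_sum w (V - e) l)"
    unfolding matching_sum_def sum_distrib_left
    by (subst sum.Sigma) (auto simp: fin finite_two_sets finite_matchings)
  finally show ?thesis .
qed

lemma matching_moment_0: "finite V \<Longrightarrow> matching_moment w V 0 = 1"
  by (simp add: matching_moment_def matching_sum_0)

lemma matching_moment_Suc:
  "finite V \<Longrightarrow> matching_moment w V (Suc l) = (\<Sum>e\<in>two_sets V. w e * matching_moment w (V - e) l)"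
  unfolding matching_moment_def
  by (simp add: matching_sum_Suc[symmetric] sum_distrib_left[symmetric] mult.left_commute)

definition total_weight :: "(nat set \<Rightarrow> real) \<Rightarrow> nat set \<Rightarrow> real" where
  "total_weight w V = (\<Sum>e\<in>two_sets V. w e)"

definition degree :: "(nat set \<Rightarrow> real) \<Rightarrow> nat set \<Rightarrow> nat \<Rightarrow> real" where
  "degree w V i = (\<Sum>j\<in>V - {i}. w {i, j})"

definition degree_square_sum :: "(nat set \<Rightarrow> real) \<Rightarrow> nat set \<Rightarrow> real" where
  "degree_square_sum w V = (\<Sum>i\<in>V. (degree w V i)\<^sup>2)"

definition cherry_sum :: "(nat set \<Rightarrow> real) \<Rightarrow> nat set \<Rightarrow> real" where
  "cherry_sum w V = (\<Sum>i\<in>V. \<Sum>e\<in>two_sets (V - {i}). \<Prod>j\<in>e. w {i, j})"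

lemma total_weight_remove:
  assumes "finite V" "a \<in> V"
  shows "total_weight w V = total_weight w (V - {a}) + degree w V a"
proof -
  have split: "two_sets V = two_sets (V - {a}) \<union> {e\<in>two_sets V. a \<in> e}"
    by (auto simp: two_sets_def)
  have "(\<Sum>e\<in>{e\<in>two_sets V. a \<in> e}. w e) = degree w V a"
    unfolding degree_def
  proof (rule sum.reindex_bij_witness[where i="\<lambda>j. {a, j}" and j="\<lambda>e. the_elem (e - {a})"])
    fix e assume "e \<in> {e\<in>two_sets V. a \<in> e}"
    then obtain j where "e = {a, j}" "j \<in> V" "j \<noteq> a"
      by (auto simp: two_sets_def card_2_iff doubleton_eq_iff)
    then show "{a, the_elem (e - {a})} = e" "the_elem (e - {a}) \<in> V - {a}"
      "w {a, the_elem (e - {a})} = w e" by auto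
  qed (use assms in \<open>auto simp: two_sets_def\<close>)
  then show ?thesis
    unfolding total_weight_def using assms
    by (subst split, subst sum.union_disjoint) (auto simp: finite_two_sets two_sets_def)
qed

lemma degree_remove:
  assumes "finite V" "a \<in> V" "b \<in> V" "a \<noteq> b"
  shows "degree w (V - {a}) b = degree w V b - w {a, b}"
proof -
  have "V - {b} = insert a (V - {a} - {b})" using assms by auto
  then show ?thesis unfolding degree_def using assms by (simp add: insert_commute)
qed

lemma total_weight_remove_two_set:
  assumes "finite V" "e \<in> two_sets V"
  shows "total_weight w V - total_weight w (V - e) = degree w V (Min e) + degree w V (Max e) - w e"
proof -
  note e = two_sets_Min_Max[OF assms(2)]
  have "V - e = V - {Min e} - {Max e}" by (subst e(1)) auto
  then show ?thesis
    using total_weight_remove[OF assms(1) e(3)] total_weight_remove[of "V - {Min e}" "Max e"]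
      degree_remove[OF assms(1) e(3,4)] e assms(1) by force
qed

lemma sum_weight_mult_total_weight_diff:
  assumes "finite V"
  shows "(\<Sum>e\<in>two_sets V. w e * (total_weight w V - total_weight w (V - e)))
    = degree_square_sum w V - (\<Sum>e\<in>two_sets V. (w e)\<^sup>2)"
proof -
  have "(\<Sum>e\<in>two_sets V. w e * (degree w V (Min e) + degree w V (Max e)))
      = (\<Sum>i\<in>V. \<Sum>j\<in>{j\<in>V. i < j}. w {i, j} * degree w V i + w {j, i} * degree w V j)"
    by (subst sum_two_sets_eq_sum_pairs[OF assms]) (auto intro!: sum.cong simp: algebra_simps insert_commute)
  also have "\<dots> = degree_square_sum w V"
    unfolding sum_off_diagonal_eq_sum_pairs[OF assms, symmetric] degree_square_sum_def degree_def
    by (simp add: sum_distrib_right power2_eq_square)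
  moreover have "(\<Sum>e\<in>two_sets V. w e * (total_weight w V - total_weight w (V - e)))
      = (\<Sum>e\<in>two_sets V. w e * (degree w V (Min e) + degree w V (Max e))) - (\<Sum>e\<in>two_sets V. (w e)\<^sup>2)"
    using assms by (simp add: total_weight_remove_two_set sum_subtractf[symmetric] algebra_simps
        power2_eq_square cong: sum.cong)
  ultimately show ?thesis by simp
qed

lemma Suc_choose_two: "Suc l choose 2 = l + (l choose 2)"
  by (simp add: numeral_2_eq_2)

lemma two_mult_choose_two: "2 * real (l choose 2) = real l * (real l - 1)"
  by (induction l) (simp_all add: Suc_choose_two algebra_simps)

lemma choose_two_Suc_mult_power:
  fixes x :: real
  shows "real (Suc l choose 2) * x ^ (l - 1) = real l * x ^ (l - 1) + real (l choose 2) * x ^ (l - 2) * x"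
proof -
  have power: "real (l choose 2) * x ^ (l - 2) * x = real (l choose 2) * x ^ (l - 1)"
  proof (cases "l < 2")
    case False
    then obtain n where "l = Suc (Suc n)" by (metis add_2_eq_Suc le_Suc_ex not_less)
    then show ?thesis by simp
  qed simp
  show ?thesis unfolding Suc_choose_two power of_nat_add distrib_right ..
qed

lemma sum_weight_mult_linearization:
  fixes w :: "nat set \<Rightarrow> real"
  assumes "finite V"
  defines "x \<equiv> total_weight w V" and "R \<equiv> degree_square_sum w V"
  shows "(\<Sum>e\<in>two_sets V. w e * (x ^ l + real l * x ^ (l - 1) * (total_weight w (V - e) - x)
            - c * R * x ^ (l - 2)))
    = x * (x ^ l - c * R * x ^ (l - 2)) - real l * x ^ (l - 1) * R
      + real l * x ^ (l - 1) * (\<Sum>e\<in>two_sets V. (w e)\<^sup>2)"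
proof -
  have diff: "(\<Sum>e\<in>two_sets V. w e * (total_weight w (V - e) - x)) = (\<Sum>e\<in>two_sets V. (w e)\<^sup>2) - R"
    using sum_weight_mult_total_weight_diff[OF assms(1), of w] unfolding x_def R_def
    by (simp add: right_diff_distrib sum_subtractf)
  have split: "(\<Sum>e\<in>two_sets V. w e * (x ^ l + real l * x ^ (l - 1) * (total_weight w (V - e) - x)
        - c * R * x ^ (l - 2)))
      = (\<Sum>e\<in>two_sets V. w e) * (x ^ l - c * R * x ^ (l - 2))
        + real l * x ^ (l - 1) * (\<Sum>e\<in>two_sets V. w e * (total_weight w (V - e) - x))"
    unfolding sum_distrib_left sum_distrib_right sum.distrib[symmetric]
    by (rule sum.cong) (simp_all add: algebra_simps)
  have "(\<Sum>e\<in>two_sets V. w e) = x" unfolding x_def total_weight_def ..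
  then show ?thesis unfolding split diff by (simp add: algebra_simps)
qed

definition expansion_error :: "(nat set \<Rightarrow> real) \<Rightarrow> nat set \<Rightarrow> nat \<Rightarrow> real" where
  "expansion_error w V l = matching_moment w V l
    - (total_weight w V ^ l - real (l choose 2) * degree_square_sum w V * total_weight w V ^ (l - 2))"

definition vertex_deletion_error :: "(nat set \<Rightarrow> real) \<Rightarrow> nat set \<Rightarrow> nat \<Rightarrow> nat \<Rightarrow> real" where
  "vertex_deletion_error w V j l = matching_moment w (V - {j}) l
    - (total_weight w V ^ l - real l * total_weight w V ^ (l - 1) * degree w V j
       - real l * (real l - 1) * cherry_sum w V * total_weight w V ^ (l - 2))"

section \<open>Small pair weights\<close>

lemma abs_sum_le_card_mult:
  fixes f :: "'a \<Rightarrow> real"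
  assumes "\<And>x. x \<in> A \<Longrightarrow> \<bar>f x\<bar> \<le> B"
  shows "\<bar>sum f A\<bar> \<le> real (card A) * B"
  using order_trans[OF sum_abs sum_bounded_above[OF assms]] .

lemma abs_power_diff_le:
  fixes x y :: real
  assumes "\<bar>x\<bar> \<le> 1" "\<bar>y\<bar> \<le> 1"
  shows "\<bar>y ^ l - x ^ l\<bar> \<le> real l * \<bar>y - x\<bar>"
proof (induction l)
  case (Suc l)
  have "\<bar>y ^ Suc l - x ^ Suc l\<bar> = \<bar>y * (y ^ l - x ^ l) + x ^ l * (y - x)\<bar>"
    by (simp add: algebra_simps)
  also have "\<dots> \<le> \<bar>y\<bar> * \<bar>y ^ l - x ^ l\<bar> + \<bar>x\<bar> ^ l * \<bar>y - x\<bar>"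
    by (metis abs_mult abs_triangle_ineq power_abs)
  also have "\<dots> \<le> 1 * (real l * \<bar>y - x\<bar>) + 1 * \<bar>y - x\<bar>"
    using assms Suc by (intro add_mono mult_mono) (auto simp: power_le_one)
  finally show ?case by (simp add: algebra_simps)
qed simp

lemma abs_power_linearization_le:
  fixes x y :: real
  assumes "\<bar>x\<bar> \<le> 1" "\<bar>y\<bar> \<le> 1"
  shows "\<bar>y ^ l - x ^ l - real l * x ^ (l - 1) * (y - x)\<bar> \<le> real l ^ 2 * (y - x)\<^sup>2"
proof (induction l)
  case (Suc l)
  have "y ^ Suc l - x ^ Suc l - real (Suc l) * x ^ l * (y - x)
      = y * (y ^ l - x ^ l - real l * x ^ (l - 1) * (y - x)) + real l * x ^ (l - 1) * (y - x)\<^sup>2"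
    by (cases l) (simp_all add: algebra_simps power2_eq_square)
  also have "\<bar>\<dots>\<bar> \<le> \<bar>y\<bar> * (real l ^ 2 * (y - x)\<^sup>2) + real l * \<bar>x\<bar> ^ (l - 1) * (y - x)\<^sup>2"
    using Suc by (intro order_trans[OF abs_triangle_ineq] add_mono)
      (auto simp: abs_mult power_abs intro: mult_left_mono)
  also have "\<dots> \<le> 1 * (real l ^ 2 * (y - x)\<^sup>2) + real l * 1 * (y - x)\<^sup>2"
    using assms by (intro add_mono mult_mono mult_right_mono) (auto simp: power_le_one)
  also have "\<dots> = (real l ^ 2 + real l) * (y - x)\<^sup>2"
    by (simp add: algebra_simps)
  also have "\<dots> \<le> real (Suc l) ^ 2 * (y - x)\<^sup>2"
    by (intro mult_right_mono zero_le_power2) (simp add: power2_eq_square algebra_simps)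
  finally show ?case by simp
qed simp

lemma abs_mult_mult_power_le:
  fixes a b c A :: real
  assumes "0 \<le> c" "\<bar>a\<bar> \<le> A" "\<bar>b\<bar> \<le> 1"
  shows "\<bar>c * a * b ^ n\<bar> \<le> c * A"
proof -
  have "\<bar>a\<bar> * \<bar>b\<bar> ^ n \<le> A * 1"
    using assms by (intro mult_mono) (auto simp: power_le_one)
  then show ?thesis
    using mult_left_mono[OF _ assms(1)] by (simp add: abs_mult power_abs assms(1) mult.assoc)
qed

locale small_pair_weights =
  fixes w :: "nat set \<Rightarrow> real" and V :: "nat set" and N :: real
  assumes finite_V: "finite V" and card_V_le: "real (card V) \<le> N" and N_ge_1: "N \<ge> 1"
    and abs_weight_le: "e \<in> two_sets V \<Longrightarrow> \<bar>w e\<bar> \<le> 1 / N\<^sup>2"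
begin

lemma N_pos: "N > 0"
  using N_ge_1 by simp

lemma small_pair_weights_subset:
  assumes "U \<subseteq> V"
  shows "small_pair_weights w U N"
proof
  show "finite U" using assms finite_V by (rule finite_subset)
  show "real (card U) \<le> N"
    using card_mono[OF finite_V assms] card_V_le by linarith
  show "\<bar>w e\<bar> \<le> 1 / N\<^sup>2" if "e \<in> two_sets U" for e
    using abs_weight_le that two_sets_mono[OF assms] by blast
qed (rule N_ge_1)

lemma abs_sum_subset_le:
  assumes "A \<subseteq> V" "0 \<le> B" "\<And>x. x \<in> A \<Longrightarrow> \<bar>f x\<bar> \<le> B"
  shows "\<bar>sum f A\<bar> \<le> N * B"
proof -
  have "real (card A) \<le> N"
    using assms(1) finite_V card_V_le by (meson card_mono of_nat_le_iff order_trans)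
  then show ?thesis
    using abs_sum_le_card_mult[of A f B, OF assms(3)] assms(2) by (meson mult_right_mono order_trans)
qed

lemma abs_weight_pair_le: "i \<in> V \<Longrightarrow> j \<in> V \<Longrightarrow> i \<noteq> j \<Longrightarrow> \<bar>w {i, j}\<bar> \<le> 1 / N\<^sup>2"
  by (simp add: abs_weight_le doubleton_in_two_sets)

lemma sum_abs_weight_le_1: "(\<Sum>e\<in>two_sets V. \<bar>w e\<bar>) \<le> 1"
proof -
  have "real (card (two_sets V)) \<le> real (card V) ^ 2"
    using card_two_sets_le[OF finite_V] by (metis of_nat_le_iff of_nat_power)
  also have "\<dots> \<le> N\<^sup>2"
    using card_V_le by (simp add: power_mono)
  finally have "(\<Sum>e\<in>two_sets V. \<bar>w e\<bar>) \<le> N\<^sup>2 * (1 / N\<^sup>2)"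
    using sum_bounded_above[of "two_sets V" "\<lambda>e. \<bar>w e\<bar>", OF abs_weight_le]
    by (smt (verit, best) mult_right_mono zero_le_divide_1_iff zero_le_power2)
  then show ?thesis using N_pos by simp
qed

lemma abs_total_weight_le_1: "\<bar>total_weight w V\<bar> \<le> 1"
  unfolding total_weight_def using sum_abs_weight_le_1 sum_abs[of w "two_sets V"] by linarith

lemma sum_weight_square_le: "(\<Sum>e\<in>two_sets V. (w e)\<^sup>2) \<le> 1 / N\<^sup>2"
proof -
  have "(w e)\<^sup>2 \<le> \<bar>w e\<bar> * (1 / N\<^sup>2)" if "e \<in> two_sets V" for e
    using mult_left_mono[OF abs_weight_le[OF that], of "\<bar>w e\<bar>"] by (simp add: power2_eq_square)
  then have "(\<Sum>e\<in>two_sets V. (w e)\<^sup>2) \<le> (\<Sum>e\<in>two_sets V. \<bar>w e\<bar>) * (1 / N\<^sup>2)"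
    unfolding sum_distrib_right by (rule sum_mono)
  also have "\<dots> \<le> 1 / N\<^sup>2"
    using sum_abs_weight_le_1 by (simp add: divide_right_mono)
  finally show ?thesis .
qed

lemma abs_degree_le: "i \<in> V \<Longrightarrow> \<bar>degree w V i\<bar> \<le> 1 / N"
proof -
  assume "i \<in> V"
  then have "\<bar>degree w V i\<bar> \<le> N * (1 / N\<^sup>2)"
    unfolding degree_def by (intro abs_sum_subset_le) (auto simp: abs_weight_pair_le)
  then show ?thesis using N_pos by (simp add: power2_eq_square)
qed

lemma square_degree_le: "i \<in> V \<Longrightarrow> (degree w V i)\<^sup>2 \<le> 1 / N\<^sup>2"
proof -
  assume "i \<in> V"
  from power_mono[OF abs_degree_le[OF this], of 2] show ?thesis
    by (simp add: power_divide)
qed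

lemma abs_degree_square_sum_le: "\<bar>degree_square_sum w V\<bar> \<le> 1 / N"
proof -
  have "\<bar>degree_square_sum w V\<bar> \<le> N * (1 / N\<^sup>2)"
    unfolding degree_square_sum_def by (intro abs_sum_subset_le) (auto simp: square_degree_le)
  then show ?thesis using N_pos by (simp add: power2_eq_square)
qed

lemma degree_diff_le:
  assumes "U \<subseteq> V" "card (V - U) \<le> 2" "i \<in> U"
  shows "\<bar>degree w V i - degree w U i\<bar> \<le> 2 / N\<^sup>2"
proof -
  have "(V - {i}) - (U - {i}) = V - U" using assms(3) by auto
  then have "degree w V i - degree w U i = (\<Sum>j\<in>V - U. w {i, j})"
    unfolding degree_def using assms(1) finite_V by (subst sum_diff[symmetric]) auto
  also have "\<bar>\<dots>\<bar> \<le> real (card (V - U)) * (1 / N\<^sup>2)"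
    using assms by (intro abs_sum_le_card_mult abs_weight_pair_le) auto
  also have "\<dots> \<le> 2 / N\<^sup>2"
    using assms(2) by (simp add: divide_right_mono)
  finally show ?thesis .
qed

lemma degree_square_sum_diff_le:
  assumes UV: "U \<subseteq> V" and two: "card (V - U) \<le> 2"
  shows "\<bar>degree_square_sum w V - degree_square_sum w U\<bar> \<le> 6 / N\<^sup>2"
proof -
  interpret U: small_pair_weights w U N using small_pair_weights_subset[OF UV] .
  have "degree_square_sum w V - degree_square_sum w U
      = (\<Sum>i\<in>V - U. (degree w V i)\<^sup>2) + (\<Sum>i\<in>U. (degree w V i)\<^sup>2 - (degree w U i)\<^sup>2)"
    unfolding degree_square_sum_def using UV finite_V
    by (simp add: sum.subset_diff[of U V] sum_subtractf)
  moreover have "\<bar>\<Sum>i\<in>V - U. (degree w V i)\<^sup>2\<bar> \<le> real (card (V - U)) * (1 / N\<^sup>2)"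
    by (intro abs_sum_le_card_mult) (simp add: square_degree_le)
  moreover have "\<bar>\<Sum>i\<in>U. (degree w V i)\<^sup>2 - (degree w U i)\<^sup>2\<bar> \<le> N * (4 / N^3)"
  proof (intro abs_sum_subset_le)
    fix i assume i: "i \<in> U"
    have "\<bar>degree w V i + degree w U i\<bar> \<le> 2 / N"
      using abs_degree_le[of i] U.abs_degree_le[OF i] i UV by auto
    then have "\<bar>degree w V i - degree w U i\<bar> * \<bar>degree w V i + degree w U i\<bar> \<le> (2 / N\<^sup>2) * (2 / N)"
      using degree_diff_le[OF UV two i] by (intro mult_mono) auto
    moreover have "(degree w V i)\<^sup>2 - (degree w U i)\<^sup>2
        = (degree w V i - degree w U i) * (degree w V i + degree w U i)"
      by (simp add: power2_eq_square algebra_simps)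
    ultimately show "\<bar>(degree w V i)\<^sup>2 - (degree w U i)\<^sup>2\<bar> \<le> 4 / N^3"
      by (simp add: abs_mult power2_eq_square power3_eq_cube)
  qed (use UV N_pos in auto)
  moreover have "real (card (V - U)) * (1 / N\<^sup>2) \<le> 2 / N\<^sup>2" "N * (4 / N^3) = 4 / N\<^sup>2"
    using two N_pos by (simp_all add: divide_right_mono power2_eq_square power3_eq_cube)
  ultimately show ?thesis by linarith
qed

lemma total_weight_diff_le:
  assumes UV: "U \<subseteq> V" and two: "card (V - U) \<le> 2"
  shows "\<bar>total_weight w V - total_weight w U\<bar> \<le> 2 / N"
proof -
  have "two_sets V - two_sets U \<subseteq> (\<Union>a\<in>V - U. (\<lambda>j. {a, j}) ` V)"
  proof
    fix e assume e: "e \<in> two_sets V - two_sets U"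
    then have "e \<in> two_sets V" "\<not> e \<subseteq> U" by (auto simp: two_sets_def)
    note mm = two_sets_Min_Max[OF this(1)]
    have "\<not> {Min e, Max e} \<subseteq> U"
      using mm(1) \<open>\<not> e \<subseteq> U\<close> by argo
    then have "Min e \<notin> U \<or> Max e \<notin> U" by simp
    moreover have "e = {Max e, Min e}" using mm(1) insert_commute by metis
    ultimately show "e \<in> (\<Union>a\<in>V - U. (\<lambda>j. {a, j}) ` V)"
      using mm by blast
  qed
  then have "card (two_sets V - two_sets U) \<le> card (\<Union>a\<in>V - U. (\<lambda>j. {a, j}) ` V)"
    by (intro card_mono) (simp add: finite_V)
  also have "\<dots> \<le> (\<Sum>a\<in>V - U. card ((\<lambda>j. {a, j}) ` V))"
    by (rule card_UN_le) (simp add: finite_V)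
  also have "\<dots> \<le> card (V - U) * card V"
    using sum_bounded_above[of "V - U" "\<lambda>a. card ((\<lambda>j. {a, j}) ` V)" "card V"]
    by (simp add: card_image_le finite_V)
  finally have "real (card (two_sets V - two_sets U)) \<le> 2 * N"
    using two card_V_le mult_mono[of "real (card (V - U))" 2 "real (card V)" N]
    by (simp add: of_nat_mult[symmetric] del: of_nat_mult)
  moreover have "total_weight w V - total_weight w U = (\<Sum>e\<in>two_sets V - two_sets U. w e)"
    unfolding total_weight_def using two_sets_mono[OF UV] finite_V
    by (subst sum_diff) (auto simp: finite_two_sets)
  moreover have "\<bar>\<Sum>e\<in>two_sets V - two_sets U. w e\<bar> \<le> real (card (two_sets V - two_sets U)) * (1 / N\<^sup>2)"
    using abs_weight_le by (intro abs_sum_le_card_mult) auto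
  ultimately have "\<bar>total_weight w V - total_weight w U\<bar> \<le> 2 * N * (1 / N\<^sup>2)"
    by (smt (verit) mult_right_mono zero_le_divide_1_iff zero_le_power2)
  then show ?thesis using N_pos by (simp add: power2_eq_square)
qed

lemma degree_square_sum_cherry_sum:
  "\<bar>degree_square_sum w V - 2 * cherry_sum w V\<bar> \<le> 1 / N\<^sup>2"
proof -
  have "degree_square_sum w V - 2 * cherry_sum w V = (\<Sum>i\<in>V. \<Sum>j\<in>V - {i}. (w {i, j})\<^sup>2)"
    unfolding degree_square_sum_def degree_def cherry_sum_def
    by (simp add: square_sum_two_sets finite_V sum.distrib sum_distrib_left)
  also have "\<bar>\<dots>\<bar> \<le> N * (N * (1 / N ^ 4))"
  proof (rule abs_sum_subset_le)
    fix i assume i: "i \<in> V"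
    have "\<bar>(w {i, j})\<^sup>2\<bar> \<le> 1 / N ^ 4" if "j \<in> V - {i}" for j
    proof -
      have "\<bar>w {i, j}\<bar>\<^sup>2 \<le> (1 / N\<^sup>2)\<^sup>2"
        using i that by (intro power_mono abs_weight_pair_le) auto
      then show ?thesis by (simp add: power_divide flip: power_mult)
    qed
    then show "\<bar>\<Sum>j\<in>V - {i}. (w {i, j})\<^sup>2\<bar> \<le> N * (1 / N ^ 4)"
      by (intro abs_sum_subset_le) auto
  qed (use N_pos in auto)
  also have "\<dots> = 1 / N\<^sup>2"
    using N_pos by (simp add: power2_eq_square power4_eq_xxxx)
  finally show ?thesis .
qed

lemma abs_sum_weight_mult_le:
  assumes "0 \<le> B" "\<And>e. e \<in> two_sets V \<Longrightarrow> \<bar>f e\<bar> \<le> B"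
  shows "\<bar>\<Sum>e\<in>two_sets V. w e * f e\<bar> \<le> B"
proof -
  have "\<bar>\<Sum>e\<in>two_sets V. w e * f e\<bar> \<le> (\<Sum>e\<in>two_sets V. \<bar>w e\<bar> * B)"
    using assms(2) by (intro order_trans[OF sum_abs] sum_mono) (simp add: abs_mult mult_left_mono)
  also have "\<dots> \<le> B"
    using sum_abs_weight_le_1 assms(1) by (simp add: mult_left_le_one_le flip: sum_distrib_right)
  finally show ?thesis .
qed

lemma abs_off_diagonal_sum_le:
  assumes c: "\<And>j. j \<in> V \<Longrightarrow> \<bar>c j\<bar> \<le> 1" and a: "\<And>i. i \<in> V \<Longrightarrow> \<bar>a i\<bar> \<le> 1"
    and y: "\<bar>y\<bar> \<le> 1" and B: "0 \<le> B"
    and f: "\<And>i j. i \<in> V \<Longrightarrow> j \<in> V \<Longrightarrow> i \<noteq> j \<Longrightarrow> \<bar>f i j - y\<bar> \<le> B"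
  shows "\<bar>(\<Sum>j\<in>V. \<Sum>i\<in>V - {j}. c j * a i * f i j) - (\<Sum>j\<in>V. c j) * (\<Sum>i\<in>V. a i) * y\<bar>
    \<le> N * (N * B) + N"
proof -
  have "(\<Sum>j\<in>V. c j) * (\<Sum>i\<in>V. a i) * y = (\<Sum>j\<in>V. c j * (\<Sum>i\<in>V. a i) * y)"
    by (simp add: sum_distrib_right)
  also have "\<dots> = (\<Sum>j\<in>V. (\<Sum>i\<in>V - {j}. c j * a i * y) + c j * a j * y)"
    by (intro sum.cong refl)
      (simp add: sum.remove[OF finite_V] sum_distrib_left sum_distrib_right algebra_simps)
  finally have "(\<Sum>j\<in>V. c j) * (\<Sum>i\<in>V. a i) * y
      = (\<Sum>j\<in>V. (\<Sum>i\<in>V - {j}. c j * a i * y) + c j * a j * y)" .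
  then have "(\<Sum>j\<in>V. \<Sum>i\<in>V - {j}. c j * a i * f i j) - (\<Sum>j\<in>V. c j) * (\<Sum>i\<in>V. a i) * y
      = (\<Sum>j\<in>V. \<Sum>i\<in>V - {j}. c j * a i * (f i j - y)) - (\<Sum>j\<in>V. c j * a j * y)"
    by (simp add: sum.distrib sum_subtractf right_diff_distrib)
  moreover have "\<bar>\<Sum>j\<in>V. \<Sum>i\<in>V - {j}. c j * a i * (f i j - y)\<bar> \<le> N * (N * B)"
  proof (rule abs_sum_subset_le)
    fix j assume j: "j \<in> V"
    show "\<bar>\<Sum>i\<in>V - {j}. c j * a i * (f i j - y)\<bar> \<le> N * B"
    proof (intro abs_sum_subset_le)
      fix i assume "i \<in> V - {j}"
      then have "\<bar>c j * a i\<bar> * \<bar>f i j - y\<bar> \<le> 1 * B"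
        using c[OF j] a f[of i j] j by (intro mult_mono) (auto simp: abs_mult mult_le_one)
      then show "\<bar>c j * a i * (f i j - y)\<bar> \<le> B" by (simp add: abs_mult)
    qed (use B in auto)
  qed (use B N_pos in auto)
  moreover have "\<bar>\<Sum>j\<in>V. c j * a j * y\<bar> \<le> N * 1"
    using c a y by (intro abs_sum_subset_le) (auto simp: abs_mult mult_le_one)
  ultimately show ?thesis by linarith
qed

lemma degree_square_sum_power_perturbation:
  assumes UV: "U \<subseteq> V" and two: "card (V - U) \<le> 2"
  shows "\<bar>degree_square_sum w U * total_weight w U ^ m - degree_square_sum w V * total_weight w V ^ m\<bar>
    \<le> (6 + 2 * real m) / N\<^sup>2"
proof -
  interpret U: small_pair_weights w U N using small_pair_weights_subset[OF UV] .
  define x where "x = total_weight w V"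
  define y where "y = total_weight w U"
  define R where "R = degree_square_sum w V"
  define S where "S = degree_square_sum w U"
  have "\<bar>S * y ^ m - R * x ^ m\<bar> = \<bar>(S - R) * y ^ m + R * (y ^ m - x ^ m)\<bar>"
    by (simp add: algebra_simps)
  also have "\<dots> \<le> \<bar>S - R\<bar> * \<bar>y\<bar> ^ m + \<bar>R\<bar> * \<bar>y ^ m - x ^ m\<bar>"
    by (metis abs_mult abs_triangle_ineq power_abs)
  also have "\<dots> \<le> 6 / N\<^sup>2 * 1 + 1 / N * (real m * (2 / N))"
  proof (intro add_mono mult_mono)
    show "\<bar>S - R\<bar> \<le> 6 / N\<^sup>2"
      using degree_square_sum_diff_le[OF UV two] unfolding R_def S_def by (simp add: abs_minus_commute)
    show "\<bar>y\<bar> ^ m \<le> 1"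
      unfolding y_def using U.abs_total_weight_le_1 by (simp add: power_le_one)
    show "\<bar>R\<bar> \<le> 1 / N"
      unfolding R_def by (rule abs_degree_square_sum_le)
    have "\<bar>y ^ m - x ^ m\<bar> \<le> real m * \<bar>y - x\<bar>"
      unfolding x_def y_def by (intro abs_power_diff_le abs_total_weight_le_1 U.abs_total_weight_le_1)
    also have "\<dots> \<le> real m * (2 / N)"
      using total_weight_diff_le[OF UV two] unfolding x_def y_def
      by (intro mult_left_mono) (auto simp: abs_minus_commute)
    finally show "\<bar>y ^ m - x ^ m\<bar> \<le> real m * (2 / N)" .
  qed (use N_pos in auto)
  also have "\<dots> = (6 + 2 * real m) / N\<^sup>2"
    by (simp add: power2_eq_square add_divide_distrib)
  finally show ?thesis unfolding x_def y_def R_def S_def .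
qed

lemma main_term_perturbation:
  assumes UV: "U \<subseteq> V" and two: "card (V - U) \<le> 2"
  defines "x \<equiv> total_weight w V" and "y \<equiv> total_weight w U"
  shows "\<bar>(y ^ l - c * degree_square_sum w U * y ^ (l - 2))
      - (x ^ l + real l * x ^ (l - 1) * (y - x) - c * degree_square_sum w V * x ^ (l - 2))\<bar>
    \<le> (4 * real l ^ 2 + \<bar>c\<bar> * (6 + 2 * real l)) / N\<^sup>2"
proof -
  interpret U: small_pair_weights w U N using small_pair_weights_subset[OF UV] .
  have "\<bar>y ^ l - x ^ l - real l * x ^ (l - 1) * (y - x)\<bar> \<le> real l ^ 2 * (y - x)\<^sup>2"
    unfolding x_def y_def by (intro abs_power_linearization_le abs_total_weight_le_1 U.abs_total_weight_le_1)
  also have "\<dots> \<le> real l ^ 2 * (2 / N)\<^sup>2"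
    using total_weight_diff_le[OF UV two] unfolding x_def y_def
    using N_pos by (intro mult_left_mono) (auto simp: abs_minus_commute power2_le_iff_abs_le)
  finally have lin: "\<bar>y ^ l - x ^ l - real l * x ^ (l - 1) * (y - x)\<bar> \<le> 4 * real l ^ 2 / N\<^sup>2"
    by (simp add: power_divide mult.commute)
  have "\<bar>c\<bar> * \<bar>degree_square_sum w U * y ^ (l - 2) - degree_square_sum w V * x ^ (l - 2)\<bar>
      \<le> \<bar>c\<bar> * ((6 + 2 * real (l - 2)) / N\<^sup>2)"
    unfolding x_def y_def by (intro mult_left_mono degree_square_sum_power_perturbation[OF UV two]) auto
  also have "\<dots> \<le> \<bar>c\<bar> * ((6 + 2 * real l) / N\<^sup>2)"
    by (intro mult_left_mono divide_right_mono) auto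
  finally have quad: "\<bar>c * (degree_square_sum w U * y ^ (l - 2) - degree_square_sum w V * x ^ (l - 2))\<bar>
      \<le> \<bar>c\<bar> * (6 + 2 * real l) / N\<^sup>2"
    by (simp add: abs_mult)
  have "(y ^ l - c * degree_square_sum w U * y ^ (l - 2))
      - (x ^ l + real l * x ^ (l - 1) * (y - x) - c * degree_square_sum w V * x ^ (l - 2))
    = (y ^ l - x ^ l - real l * x ^ (l - 1) * (y - x))
      - c * (degree_square_sum w U * y ^ (l - 2) - degree_square_sum w V * x ^ (l - 2))"
    by (simp add: algebra_simps)
  moreover have "(4 * real l ^ 2 + \<bar>c\<bar> * (6 + 2 * real l)) / N\<^sup>2
      = 4 * real l ^ 2 / N\<^sup>2 + \<bar>c\<bar> * (6 + 2 * real l) / N\<^sup>2"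
    by (simp add: add_divide_distrib)
  ultimately show ?thesis
    using abs_triangle_ineq4 lin quad by (smt (verit))
qed

lemma expansion_error_Suc_le:
  assumes K: "0 \<le> K"
    and IH: "\<And>U. U \<subseteq> V \<Longrightarrow> card (V - U) \<le> 2 \<Longrightarrow> \<bar>expansion_error w U l\<bar> \<le> K / N\<^sup>2"
  shows "\<bar>expansion_error w V (Suc l)\<bar>
    \<le> (K + 4 * real l ^ 2 + real (l choose 2) * (6 + 2 * real l) + real l) / N\<^sup>2"
proof -
  define x where "x = total_weight w V"
  define R where "R = degree_square_sum w V"
  define c where "c = real (l choose 2)"
  define L where "L e = x ^ l + real l * x ^ (l - 1) * (total_weight w (V - e) - x) - c * R * x ^ (l - 2)"
    for e
  define B where "B = K + 4 * real l ^ 2 + c * (6 + 2 * real l)"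
  have "\<bar>matching_moment w (V - e) l - L e\<bar> \<le> B / N\<^sup>2" if e: "e \<in> two_sets V" for e
  proof -
    have "e \<subseteq> V" "card e = 2" using e by (auto simp: two_sets_def)
    then have sub: "V - e \<subseteq> V" "card (V - (V - e)) \<le> 2"
      by (auto simp: Diff_Diff_Int Int_absorb1)
    show ?thesis
      using IH[OF sub] main_term_perturbation[OF sub, of l c]
      unfolding expansion_error_def L_def B_def x_def R_def c_def by (simp add: add_divide_distrib) linarith
  qed
  then have err: "\<bar>\<Sum>e\<in>two_sets V. w e * (matching_moment w (V - e) l - L e)\<bar> \<le> B / N\<^sup>2"
    using K by (intro abs_sum_weight_mult_le) (auto simp: B_def c_def)
  have "real l * \<bar>x\<bar> ^ (l - 1) * (\<Sum>e\<in>two_sets V. (w e)\<^sup>2) \<le> real l * 1 * (1 / N\<^sup>2)"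
    using abs_total_weight_le_1 sum_weight_square_le unfolding x_def
    by (intro mult_mono mult_left_mono) (auto simp: power_le_one sum_nonneg)
  then have quad: "\<bar>real l * x ^ (l - 1) * (\<Sum>e\<in>two_sets V. (w e)\<^sup>2)\<bar> \<le> real l / N\<^sup>2"
    by (simp add: abs_mult power_abs sum_nonneg)
  have "matching_moment w V (Suc l)
      = (\<Sum>e\<in>two_sets V. w e * L e) + (\<Sum>e\<in>two_sets V. w e * (matching_moment w (V - e) l - L e))"
    by (simp add: matching_moment_Suc[OF finite_V] algebra_simps flip: sum.distrib)
  also have "(\<Sum>e\<in>two_sets V. w e * L e) = x ^ Suc l - real (Suc l choose 2) * R * x ^ (Suc l - 2)
      + real l * x ^ (l - 1) * (\<Sum>e\<in>two_sets V. (w e)\<^sup>2)"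
    unfolding L_def x_def R_def sum_weight_mult_linearization[OF finite_V]
    using choose_two_Suc_mult_power[of l "total_weight w V"]
    by (simp add: c_def algebra_simps)
  finally show ?thesis
    using err quad unfolding expansion_error_def x_def R_def B_def c_def by (simp add: add_divide_distrib)
qed

end

section \<open>Expansion of the matching moments\<close>

theorem expansion_error_le:
  "\<exists>K\<ge>0. \<forall>w V N. small_pair_weights w V N \<longrightarrow> \<bar>expansion_error w V l\<bar> \<le> K / N\<^sup>2"
proof (induction l)
  case 0
  show ?case by (auto simp: small_pair_weights_def expansion_error_def matching_moment_0)
next
  case (Suc l)
  then obtain K where "0 \<le> K"
    and K: "\<And>w V N. small_pair_weights w V N \<Longrightarrow> \<bar>expansion_error w V l\<bar> \<le> K / N\<^sup>2"
    by blast
  show ?case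
  proof (intro exI[of _ "K + 4 * real l ^ 2 + real (l choose 2) * (6 + 2 * real l) + real l"] conjI allI impI)
    fix w V N assume "small_pair_weights w V N"
    then interpret small_pair_weights w V N .
    show "\<bar>expansion_error w V (Suc l)\<bar>
      \<le> (K + 4 * real l ^ 2 + real (l choose 2) * (6 + 2 * real l) + real l) / N\<^sup>2"
      using \<open>0 \<le> K\<close> K[OF small_pair_weights_subset] by (rule expansion_error_Suc_le)
  qed (use \<open>0 \<le> K\<close> in auto)
qed

lemma matching_moment_first_order:
  "\<exists>K\<ge>0. \<forall>w V U N. small_pair_weights w V N \<longrightarrow> U \<subseteq> V \<longrightarrow> card (V - U) \<le> 2 \<longrightarrow>
     \<bar>matching_moment w U m - total_weight w V ^ m\<bar> \<le> K / N"
proof -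
  obtain K where "0 \<le> K"
    and K: "\<And>w V N. small_pair_weights w V N \<Longrightarrow> \<bar>expansion_error w V m\<bar> \<le> K / N\<^sup>2"
    using expansion_error_le[of m] by blast
  show ?thesis
  proof (intro exI[of _ "K + real (m choose 2) + 2 * real m"] conjI allI impI)
    fix w V U N
    assume "small_pair_weights w V N" and UV: "U \<subseteq> V" and two: "card (V - U) \<le> 2"
    then interpret small_pair_weights w V N by simp
    interpret U: small_pair_weights w U N using small_pair_weights_subset[OF UV] .
    have "K / N\<^sup>2 \<le> K / N"
      using \<open>0 \<le> K\<close> N_ge_1 by (intro divide_left_mono) (auto simp: power2_eq_square)
    then have expansion: "\<bar>expansion_error w U m\<bar> \<le> K / N"
      using K[OF U.small_pair_weights_axioms] by linarith
    have "\<bar>real (m choose 2) * degree_square_sum w U * total_weight w U ^ (m - 2)\<bar>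
        \<le> real (m choose 2) * (1 / N)"
      by (intro abs_mult_mult_power_le U.abs_degree_square_sum_le U.abs_total_weight_le_1) simp
    moreover have "\<bar>total_weight w U ^ m - total_weight w V ^ m\<bar>
        \<le> real m * \<bar>total_weight w U - total_weight w V\<bar>"
      by (intro abs_power_diff_le abs_total_weight_le_1 U.abs_total_weight_le_1)
    moreover have "real m * \<bar>total_weight w U - total_weight w V\<bar> \<le> 2 * real m / N"
      using mult_left_mono[OF total_weight_diff_le[OF UV two], of "real m"]
      by (simp add: abs_minus_commute mult.commute)
    ultimately show "\<bar>matching_moment w U m - total_weight w V ^ m\<bar> \<le> (K + real (m choose 2) + 2 * real m) / N"
      using expansion unfolding expansion_error_def by (simp add: add_divide_distrib)
  qed (use \<open>0 \<le> K\<close> in auto)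
qed

text \<open>Deleting a vertex shifts the total weight by its degree, and the degree square sum is twice
  the cherry sum up to \<open>O(1/N\<^sup>2)\<close>.\<close>

theorem vertex_deletion_error_le:
  "\<exists>K\<ge>0. \<forall>w V N j. small_pair_weights w V N \<longrightarrow> j \<in> V \<longrightarrow> \<bar>vertex_deletion_error w V j l\<bar> \<le> K / N\<^sup>2"
proof -
  obtain K where "0 \<le> K"
    and K: "\<And>w V N. small_pair_weights w V N \<Longrightarrow> \<bar>expansion_error w V l\<bar> \<le> K / N\<^sup>2"
    using expansion_error_le[of l] by blast
  define c where "c = real (l choose 2)"
  show ?thesis
  proof (intro exI[of _ "K + 4 * real l ^ 2 + c * (6 + 2 * real l) + c"] conjI allI impI)
    fix w V N j assume "small_pair_weights w V N" and j: "j \<in> V"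
    then interpret small_pair_weights w V N by simp
    have UV: "V - {j} \<subseteq> V" and two: "card (V - (V - {j})) \<le> 2"
      using j by (auto simp: Diff_Diff_Int)
    interpret U: small_pair_weights w "V - {j}" N using small_pair_weights_subset[OF UV] .
    define x where "x = total_weight w V"
    have shift: "total_weight w (V - {j}) - x = - degree w V j"
      using total_weight_remove[OF finite_V j] unfolding x_def by simp
    have "\<bar>c * (degree_square_sum w V - 2 * cherry_sum w V) * x ^ (l - 2)\<bar> \<le> c * (1 / N\<^sup>2)"
      unfolding x_def c_def
      by (intro abs_mult_mult_power_le degree_square_sum_cherry_sum abs_total_weight_le_1) simp
    moreover have "real l * (real l - 1) = 2 * c"
      unfolding c_def by (simp add: two_mult_choose_two)
    ultimately show "\<bar>vertex_deletion_error w V j l\<bar> \<le> (K + 4 * real l ^ 2 + c * (6 + 2 * real l) + c) / N\<^sup>2"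
      using K[OF U.small_pair_weights_axioms] main_term_perturbation[OF UV two, of l c] shift
      unfolding vertex_deletion_error_def expansion_error_def x_def c_def
      by (simp add: add_divide_distrib algebra_simps) linarith
  qed (use \<open>0 \<le> K\<close> in \<open>auto simp: c_def\<close>)
qed

section \<open>Normalized citizen weights\<close>

definition S1_error :: "nat \<Rightarrow> nat \<Rightarrow> (nat \<Rightarrow> real) \<Rightarrow> (nat \<Rightarrow> nat \<Rightarrow> real) \<Rightarrow> real \<Rightarrow> real \<Rightarrow> real" where
  "S1_error k l b bb E \<Delta> = fact l / E ^ l * S1 k l b bb
    - (beta k b * (1 + \<Delta>) ^ l
       - Aval k b bb / E * real l * (1 + \<Delta>) ^ (l - 1)
       - beta k b * Qval k bb / E ^ 2 * real l * (real l - 1) * (1 + \<Delta>) ^ (l - 2))"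

definition S2_error :: "nat \<Rightarrow> nat \<Rightarrow> (nat \<Rightarrow> real) \<Rightarrow> (nat \<Rightarrow> nat \<Rightarrow> real) \<Rightarrow> real \<Rightarrow> real \<Rightarrow> real" where
  "S2_error k l b bb E \<Delta> = fact l / E ^ l * S2 k l b bb - alpha b * (1 + \<Delta>) ^ l"

definition S3_error :: "nat \<Rightarrow> nat \<Rightarrow> (nat \<Rightarrow> real) \<Rightarrow> (nat \<Rightarrow> nat \<Rightarrow> real) \<Rightarrow> real \<Rightarrow> real \<Rightarrow> real" where
  "S3_error k l b bb E \<Delta> = fact l / E ^ l * S3 k l b bb
    - beta k b * Wval k bb / E * real l * (1 + \<Delta>) ^ (l - 1)"

lemma of_nat_mult_power_pred: "real l * (r * r ^ (l - 1)) = real l * r ^ l"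
  by (cases l) simp_all

lemma of_nat_mult_power_pred2:
  "real l * (real l - 1) * (r\<^sup>2 * r ^ (l - 2)) = real l * (real l - 1) * r ^ l"
proof (cases "l < 2")
  case False
  then obtain n where "l = n + 2" by (metis add.commute le_Suc_ex not_less)
  then have "r\<^sup>2 * r ^ (l - 2) = r ^ l" by (simp add: power2_eq_square)
  then show ?thesis by simp
qed (auto simp: less_2_cases_iff)

definition normalized_weight :: "nat \<Rightarrow> (nat \<Rightarrow> nat \<Rightarrow> real) \<Rightarrow> nat set \<Rightarrow> real" where
  "normalized_weight k bb e = ew bb e / real k ^ 2"

locale citizen_weights =
  fixes k :: nat and bb :: "nat \<Rightarrow> nat \<Rightarrow> real"
  assumes k_ge_1: "1 \<le> k"
    and bb_bounded_symmetric: "\<forall>i\<in>{1..k}. \<forall>j\<in>{1..k}. i \<noteq> j \<longrightarrow> \<bar>bb i j\<bar> \<le> 1 \<and> bb i j = bb j i"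
begin

abbreviation w where "w \<equiv> normalized_weight k bb"
abbreviation V where "V \<equiv> citizens k"

lemma citizens_subset: "V \<subseteq> {1..k}"
  by (auto simp: citizens_def)

lemma ew_doubleton: "i \<in> {1..k} \<Longrightarrow> j \<in> {1..k} \<Longrightarrow> i \<noteq> j \<Longrightarrow> ew bb {i, j} = bb i j"
  using bb_bounded_symmetric by (cases "i < j") (auto simp: ew_def min_def max_def)

lemma normalized_doubleton:
  assumes "i \<in> V" "j \<in> V" "i \<noteq> j"
  shows "w {i, j} = bb i j / real k ^ 2"
proof -
  have "i \<in> {1..k}" "j \<in> {1..k}" using assms citizens_subset by auto
  then show ?thesis by (simp add: normalized_weight_def ew_doubleton assms(3))
qed

sublocale small_pair_weights w V "real k"
proof
  show "finite V" "real (card V) \<le> real k" "1 \<le> real k"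
    using k_ge_1 by (auto simp: citizens_def)
  fix e assume "e \<in> two_sets V"
  note e = two_sets_Min_Max[OF this]
  have "Min e \<in> {1..k}" "Max e \<in> {1..k}" "Min e \<noteq> Max e"
    using e(2-4) citizens_subset by auto
  then have "\<bar>ew bb e\<bar> \<le> 1"
    using bb_bounded_symmetric unfolding ew_def by blast
  then show "\<bar>w e\<bar> \<le> 1 / (real k)\<^sup>2"
    by (simp add: normalized_weight_def divide_right_mono)
qed

lemma pair_sum_eq: "pair_sum k bb = real k ^ 2 * total_weight w V"
proof -
  have "total_weight w V = (\<Sum>i\<in>V. \<Sum>j\<in>{j\<in>V. i < j}. w {i, j})"
    unfolding total_weight_def by (rule sum_two_sets_eq_sum_pairs[OF finite_V])
  also have "\<dots> = (\<Sum>i\<in>V. \<Sum>j\<in>{i<..k}. bb i j / real k ^ 2)"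
  proof (rule sum.cong[OF refl])
    fix i assume i: "i \<in> V"
    then have "{j\<in>V. i < j} = {i<..k}" by (auto simp: citizens_def)
    moreover have "w {i, j} = bb i j / real k ^ 2" if "j \<in> {i<..k}" for j
      using i that by (intro normalized_doubleton) (auto simp: citizens_def)
    ultimately show "(\<Sum>j\<in>{j\<in>V. i < j}. w {i, j}) = (\<Sum>j\<in>{i<..k}. bb i j / real k ^ 2)"
      by simp
  qed
  also have "\<dots> = pair_sum k bb / real k ^ 2"
    unfolding pair_sum_def sum_divide_distrib ..
  finally show ?thesis
    using k_ge_1 by simp
qed

lemma degree_eq: "i \<in> V \<Longrightarrow> real k ^ 2 * degree w V i = (\<Sum>j\<in>V - {i}. bb i j)"
  using k_ge_1 by (simp add: degree_def sum_distrib_left normalized_doubleton)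

lemma cherry_sum_eq: "real k ^ 4 * cherry_sum w V = Qval k bb"
proof -
  have "(\<Prod>j\<in>e. w {i, j}) = (\<Prod>j\<in>e. bb i j) / real k ^ 4" if "i \<in> V" "e \<in> two_sets (V - {i})" for i e
  proof -
    have e: "card e = 2" "e \<subseteq> V - {i}" using that(2) by (auto simp: two_sets_def)
    then have "(\<Prod>j\<in>e. w {i, j}) = (\<Prod>j\<in>e. bb i j / real k ^ 2)"
      using that(1) by (intro prod.cong refl) (auto intro!: normalized_doubleton)
    also have "\<dots> = (\<Prod>j\<in>e. bb i j) / real k ^ 4"
      using e by (simp add: prod_dividef flip: power_mult)
    finally show ?thesis .
  qed
  then show ?thesis
    using k_ge_1 by (simp add: cherry_sum_def Qval_def sum_distrib_left)
qed

lemma fact_mult_sum_matchings: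
  assumes "U \<subseteq> V"
  shows "fact m * (\<Sum>M\<in>matchings U m. bM bb M) = (real k ^ 2) ^ m * matching_moment w U m"
proof -
  have "bM bb M = (real k ^ 2) ^ m * (\<Prod>e\<in>M. w e)" if "M \<in> matchings U m" for M
    using that k_ge_1 by (simp add: bM_def matchings_def normalized_weight_def prod_dividef)
  then show ?thesis
    by (simp add: matching_moment_def matching_sum_def sum_distrib_left mult_ac)
qed

lemma one_plus_Delta_eq:
  assumes "0 < E" "pair_sum k bb = E * (1 + \<Delta>)"
  shows "1 + \<Delta> = real k ^ 2 / E * total_weight w V"
  using assms by (simp add: pair_sum_eq field_simps)

lemma fact_div_power_mult_sum_matchings:
  assumes "U \<subseteq> V"
  shows "fact m / E ^ m * (\<Sum>M\<in>matchings U m. bM bb M) = (real k ^ 2 / E) ^ m * matching_moment w U m"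
proof -
  have "fact m / E ^ m * (\<Sum>M\<in>matchings U m. bM bb M) = fact m * (\<Sum>M\<in>matchings U m. bM bb M) / E ^ m"
    by simp
  also have "\<dots> = (real k ^ 2 / E) ^ m * matching_moment w U m"
    unfolding fact_mult_sum_matchings[OF assms] by (simp add: power_divide)
  finally show ?thesis .
qed

lemma S2_error_eq:
  assumes "0 < E" "pair_sum k bb = E * (1 + \<Delta>)"
  defines "\<rho> \<equiv> real k ^ 2 / E"
  shows "S2_error k l b bb E \<Delta> = b 1 * \<rho> ^ l * (matching_moment w V l - total_weight w V ^ l)"
proof -
  have "1 + \<Delta> = \<rho> * total_weight w V"
    unfolding \<rho>_def by (rule one_plus_Delta_eq[OF assms(1,2)])
  then show ?thesis
    using fact_div_power_mult_sum_matchings[of V l E]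
    unfolding S2_error_def S2_def alpha_def \<rho>_def[symmetric] by (simp add: algebra_simps)
qed

lemma Aval_eq: "Aval k b bb = real k ^ 2 * (\<Sum>i\<in>V. b i * degree w V i)"
proof -
  have "(\<Sum>j\<in>V - {i}. b i * bb i j) = real k ^ 2 * (b i * degree w V i)" if "i \<in> V" for i
    using degree_eq[OF that] by (simp add: sum_distrib_left[symmetric] mult.left_commute)
  then show ?thesis
    unfolding Aval_def by (simp add: sum_distrib_left)
qed

lemma S1_main_term_eq:
  assumes "0 < E" "pair_sum k bb = E * (1 + \<Delta>)"
  defines "\<rho> \<equiv> real k ^ 2 / E" and "x \<equiv> total_weight w V"
  shows "beta k b * (1 + \<Delta>) ^ l
      - Aval k b bb / E * real l * (1 + \<Delta>) ^ (l - 1)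
      - beta k b * Qval k bb / E ^ 2 * real l * (real l - 1) * (1 + \<Delta>) ^ (l - 2)
    = \<rho> ^ l * (\<Sum>j\<in>V. b j * (x ^ l - real l * x ^ (l - 1) * degree w V j
      - real l * (real l - 1) * cherry_sum w V * x ^ (l - 2)))"
proof -
  define a where "a = (\<Sum>j\<in>V. b j * degree w V j)"
  have D: "1 + \<Delta> = \<rho> * x"
    unfolding \<rho>_def x_def by (rule one_plus_Delta_eq[OF assms(1,2)])
  have A: "Aval k b bb / E = \<rho> * a"
    unfolding Aval_eq a_def \<rho>_def by simp
  have Q: "Qval k bb / E ^ 2 = \<rho>\<^sup>2 * cherry_sum w V"
    unfolding \<rho>_def cherry_sum_eq[symmetric] by (simp add: power_divide flip: power_mult)
  have "\<rho> * a * real l * (\<rho> * x) ^ (l - 1) = real l * (\<rho> * \<rho> ^ (l - 1)) * (x ^ (l - 1) * a)"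
    by (simp add: algebra_simps)
  also have "\<dots> = \<rho> ^ l * (real l * x ^ (l - 1) * a)"
    by (simp only: of_nat_mult_power_pred) (simp add: algebra_simps)
  finally have linear: "\<rho> * a * real l * (\<rho> * x) ^ (l - 1) = \<rho> ^ l * (real l * x ^ (l - 1) * a)" .
  have "beta k b * (\<rho>\<^sup>2 * cherry_sum w V) * real l * (real l - 1) * (\<rho> * x) ^ (l - 2)
      = real l * (real l - 1) * (\<rho>\<^sup>2 * \<rho> ^ (l - 2)) * (cherry_sum w V * x ^ (l - 2) * beta k b)"
    by (simp add: algebra_simps)
  also have "\<dots> = \<rho> ^ l * (real l * (real l - 1) * cherry_sum w V * x ^ (l - 2) * beta k b)"
    by (simp only: of_nat_mult_power_pred2) (simp add: algebra_simps)
  finally have quadratic: "beta k b * (\<rho>\<^sup>2 * cherry_sum w V) * real l * (real l - 1) * (\<rho> * x) ^ (l - 2)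
      = \<rho> ^ l * (real l * (real l - 1) * cherry_sum w V * x ^ (l - 2) * beta k b)" .
  have "beta k b * (1 + \<Delta>) ^ l
      - Aval k b bb / E * real l * (1 + \<Delta>) ^ (l - 1)
      - beta k b * Qval k bb / E ^ 2 * real l * (real l - 1) * (1 + \<Delta>) ^ (l - 2)
    = \<rho> ^ l * (beta k b * x ^ l - real l * x ^ (l - 1) * a
        - real l * (real l - 1) * cherry_sum w V * x ^ (l - 2) * beta k b)"
    unfolding D A times_divide_eq_right[symmetric] Q linear quadratic by (simp add: algebra_simps)
  also have "\<dots> = \<rho> ^ l * (\<Sum>j\<in>V. b j * (x ^ l - real l * x ^ (l - 1) * degree w V j
      - real l * (real l - 1) * cherry_sum w V * x ^ (l - 2)))"
    unfolding beta_def a_def right_diff_distrib sum_subtractf sum_distrib_right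
    by (simp add: sum_distrib_left sum_distrib_right mult_ac)
  finally show ?thesis .
qed

lemma S1_error_eq:
  assumes "0 < E" "pair_sum k bb = E * (1 + \<Delta>)"
  shows "S1_error k l b bb E \<Delta> = (real k ^ 2 / E) ^ l * (\<Sum>j\<in>V. b j * vertex_deletion_error w V j l)"
proof -
  have "fact l / E ^ l * (\<Sum>M\<in>matchings (V - {j}) l. b j * bM bb M)
      = (real k ^ 2 / E) ^ l * (b j * matching_moment w (V - {j}) l)" for j
    unfolding sum_distrib_left[symmetric] mult.left_commute[of "fact l / E ^ l"]
      fact_div_power_mult_sum_matchings[OF Diff_subset] by (rule mult.left_commute)
  then have "fact l / E ^ l * S1 k l b bb
      = (real k ^ 2 / E) ^ l * (\<Sum>j\<in>V. b j * matching_moment w (V - {j}) l)"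
    unfolding S1_def sum_distrib_left by simp
  then show ?thesis
    unfolding S1_error_def S1_main_term_eq[OF assms]
    unfolding vertex_deletion_error_def right_diff_distrib sum_subtractf by simp
qed

lemma S3_error_eq:
  assumes "0 < E" "pair_sum k bb = E * (1 + \<Delta>)" "1 \<le> l"
  defines "\<rho> \<equiv> real k ^ 2 / E" and "x \<equiv> total_weight w V"
  shows "S3_error k l b bb E \<Delta> = real l * \<rho> ^ l / real k ^ 2
    * ((\<Sum>j\<in>V. \<Sum>i\<in>V - {j}. b j * bb 1 i * matching_moment w (V - {i, j}) (l - 1))
        - beta k b * Wval k bb * x ^ (l - 1))"
proof -
  have D: "1 + \<Delta> = \<rho> * x"
    unfolding \<rho>_def x_def by (rule one_plus_Delta_eq[OF assms(1,2)])
  have coeff: "real l / E * \<rho> ^ (l - 1) = real l * \<rho> ^ l / real k ^ 2"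
    using assms(1,3) k_ge_1 by (cases l) (simp_all add: \<rho>_def field_simps)
  have fact: "fact l / E ^ l = real l / E * (fact (l - 1) / E ^ (l - 1))"
    using assms(3) by (cases l) simp_all
  define c where "c = fact (l - 1) / E ^ (l - 1)"
  have inner: "c * (\<Sum>M\<in>matchings (V - {i, j}) (l - 1). b j * bb 1 i * bM bb M)
      = \<rho> ^ (l - 1) * (b j * bb 1 i * matching_moment w (V - {i, j}) (l - 1))" for i j
  proof -
    have "c * (\<Sum>M\<in>matchings (V - {i, j}) (l - 1). b j * bb 1 i * bM bb M)
        = b j * bb 1 i * (c * (\<Sum>M\<in>matchings (V - {i, j}) (l - 1). bM bb M))"
      by (simp add: sum_distrib_left mult_ac)
    then show ?thesis
      unfolding c_def \<rho>_def fact_div_power_mult_sum_matchings[OF Diff_subset] by simp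
  qed
  have "fact l / E ^ l * S3 k l b bb = real l / E * (\<Sum>j\<in>V. \<Sum>i\<in>V - {j}.
      c * (\<Sum>M\<in>matchings (V - {i, j}) (l - 1). b j * bb 1 i * bM bb M))"
    unfolding S3_def fact c_def by (simp add: sum_distrib_left mult.assoc)
  also have "\<dots> = real l / E * \<rho> ^ (l - 1)
      * (\<Sum>j\<in>V. \<Sum>i\<in>V - {j}. b j * bb 1 i * matching_moment w (V - {i, j}) (l - 1))"
    unfolding inner by (simp add: sum_distrib_left mult.assoc)
  finally have S3: "fact l / E ^ l * S3 k l b bb = real l / E * \<rho> ^ (l - 1)
      * (\<Sum>j\<in>V. \<Sum>i\<in>V - {j}. b j * bb 1 i * matching_moment w (V - {i, j}) (l - 1))" .
  show ?thesis
    unfolding S3_error_def S3 D coeff[symmetric] power_mult_distrib by (simp add: algebra_simps)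
qed

lemma abs_S1_error_le:
  assumes "0 < E" "pair_sum k bb = E * (1 + \<Delta>)" "\<forall>j\<in>V. \<bar>b j\<bar> \<le> 1" "0 \<le> K"
    and K: "\<And>j. j \<in> V \<Longrightarrow> \<bar>vertex_deletion_error w V j l\<bar> \<le> K / (real k)\<^sup>2"
  shows "\<bar>S1_error k l b bb E \<Delta>\<bar> \<le> (real k ^ 2 / E) ^ l * K / real k"
proof -
  have "\<bar>\<Sum>j\<in>V. b j * vertex_deletion_error w V j l\<bar> \<le> real k * (K / (real k)\<^sup>2)"
  proof (intro abs_sum_subset_le)
    fix j assume "j \<in> V"
    then have "\<bar>b j\<bar> * \<bar>vertex_deletion_error w V j l\<bar> \<le> 1 * (K / (real k)\<^sup>2)"
      using assms(3) K by (intro mult_mono) auto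
    then show "\<bar>b j * vertex_deletion_error w V j l\<bar> \<le> K / (real k)\<^sup>2"
      by (simp add: abs_mult)
  qed (use assms(4) in auto)
  also have "real k * (K / (real k)\<^sup>2) = K / real k"
    by (simp add: power2_eq_square)
  finally show ?thesis
    unfolding S1_error_eq[OF assms(1,2)] abs_mult using assms(1)
    by (simp add: mult_left_mono times_divide_eq_right[symmetric] del: times_divide_eq_right)
qed

lemma abs_S2_error_le:
  assumes "0 < E" "pair_sum k bb = E * (1 + \<Delta>)" "\<bar>b 1\<bar> \<le> 1" "0 \<le> K"
    and K: "\<bar>matching_moment w V l - total_weight w V ^ l\<bar> \<le> K / real k"
  shows "\<bar>S2_error k l b bb E \<Delta>\<bar> \<le> (real k ^ 2 / E) ^ l * K / real k"
proof -
  have "\<bar>b 1\<bar> * \<bar>matching_moment w V l - total_weight w V ^ l\<bar> \<le> 1 * (K / real k)"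
    using assms(3,4) K by (intro mult_mono) auto
  from mult_left_mono[OF this, of "(real k ^ 2 / E) ^ l"] show ?thesis
    unfolding S2_error_eq[OF assms(1,2)] abs_mult using assms(1) by (simp add: mult_ac)
qed

lemma abs_S3_error_le:
  assumes "0 < E" "pair_sum k bb = E * (1 + \<Delta>)" "1 \<le> l" "\<forall>j\<in>V. \<bar>b j\<bar> \<le> 1" "0 \<le> K"
    and K: "\<And>U. U \<subseteq> V \<Longrightarrow> card (V - U) \<le> 2 \<Longrightarrow>
      \<bar>matching_moment w U (l - 1) - total_weight w V ^ (l - 1)\<bar> \<le> K / real k"
  shows "\<bar>S3_error k l b bb E \<Delta>\<bar> \<le> (real k ^ 2 / E) ^ l * (real l * (K + 1)) / real k"
proof -
  have bb1: "\<bar>bb 1 i\<bar> \<le> 1" if "i \<in> V" for i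
    using that bb_bounded_symmetric k_ge_1 by (auto simp: citizens_def)
  have y: "\<bar>total_weight w V ^ (l - 1)\<bar> \<le> 1"
    by (simp add: power_abs power_le_one abs_total_weight_le_1)
  have "card (V - (V - {i, j})) \<le> 2" for i j
    by (rule order_trans[OF card_mono[of "{i, j}"]]) (auto simp: card_insert_le_m1)
  then have "\<bar>(\<Sum>j\<in>V. \<Sum>i\<in>V - {j}. b j * bb 1 i * matching_moment w (V - {i, j}) (l - 1))
      - (\<Sum>j\<in>V. b j) * (\<Sum>i\<in>V. bb 1 i) * total_weight w V ^ (l - 1)\<bar>
    \<le> real k * (real k * (K / real k)) + real k"
    using assms(4,5) bb1 y by (intro abs_off_diagonal_sum_le K) auto
  also have "\<dots> = real k * (K + 1)"
    by (simp add: algebra_simps)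
  finally have "real l * (real k ^ 2 / E) ^ l / (real k)\<^sup>2
      * \<bar>(\<Sum>j\<in>V. \<Sum>i\<in>V - {j}. b j * bb 1 i * matching_moment w (V - {i, j}) (l - 1))
        - beta k b * Wval k bb * total_weight w V ^ (l - 1)\<bar>
    \<le> real l * (real k ^ 2 / E) ^ l / (real k)\<^sup>2 * (real k * (K + 1))"
    unfolding beta_def Wval_def using assms(1) by (intro mult_left_mono) auto
  also have "\<dots> = (real k ^ 2 / E) ^ l * (real l * (K + 1)) / real k"
    using k_ge_1 by (simp add: power2_eq_square)
  finally show ?thesis
    unfolding S3_error_eq[OF assms(1-3)] abs_mult using assms(1) by simp
qed

end

theorem S_errors_le:
  assumes "1 \<le> l"
  shows "\<exists>K\<ge>0. \<forall>k bb b E \<Delta>. citizen_weights k bb \<longrightarrow> (\<forall>j\<in>{1..k}. \<bar>b j\<bar> \<le> 1) \<longrightarrow>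
    0 < E \<longrightarrow> pair_sum k bb = E * (1 + \<Delta>) \<longrightarrow>
      \<bar>S1_error k l b bb E \<Delta>\<bar> \<le> (real k ^ 2 / E) ^ l * K / real k
    \<and> \<bar>S2_error k l b bb E \<Delta>\<bar> \<le> (real k ^ 2 / E) ^ l * K / real k
    \<and> \<bar>S3_error k l b bb E \<Delta>\<bar> \<le> (real k ^ 2 / E) ^ l * K / real k"
proof -
  obtain K1 where "0 \<le> K1" and K1: "\<And>w V N j. small_pair_weights w V N \<Longrightarrow> j \<in> V \<Longrightarrow>
      \<bar>vertex_deletion_error w V j l\<bar> \<le> K1 / N\<^sup>2"
    using vertex_deletion_error_le[of l] by blast
  obtain K2 where "0 \<le> K2" and K2: "\<And>w V U N. small_pair_weights w V N \<Longrightarrow> U \<subseteq> V \<Longrightarrow>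
      card (V - U) \<le> 2 \<Longrightarrow> \<bar>matching_moment w U l - total_weight w V ^ l\<bar> \<le> K2 / N"
    using matching_moment_first_order[of l] by blast
  obtain K3 where "0 \<le> K3" and K3: "\<And>w V U N. small_pair_weights w V N \<Longrightarrow> U \<subseteq> V \<Longrightarrow>
      card (V - U) \<le> 2 \<Longrightarrow> \<bar>matching_moment w U (l - 1) - total_weight w V ^ (l - 1)\<bar> \<le> K3 / N"
    using matching_moment_first_order[of "l - 1"] by blast
  define K where "K = K1 + K2 + real l * (K3 + 1)"
  show ?thesis
  proof (intro exI[of _ K] conjI allI impI)
    fix k bb and b :: "nat \<Rightarrow> real" and E \<Delta> :: real
    assume "citizen_weights k bb" and b: "\<forall>j\<in>{1..k}. \<bar>b j\<bar> \<le> 1"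
      and E: "0 < E" and D: "pair_sum k bb = E * (1 + \<Delta>)"
    interpret citizen_weights k bb by fact
    have bV: "\<forall>j\<in>V. \<bar>b j\<bar> \<le> 1" "\<bar>b 1\<bar> \<le> 1"
      using b citizens_subset k_ge_1 by auto
    have mono: "(real k ^ 2 / E) ^ l * K' / real k \<le> (real k ^ 2 / E) ^ l * K / real k" if "K' \<le> K" for K'
      using that E by (intro divide_right_mono mult_left_mono) auto
    show "\<bar>S1_error k l b bb E \<Delta>\<bar> \<le> (real k ^ 2 / E) ^ l * K / real k"
      using abs_S1_error_le[OF E D bV(1) \<open>0 \<le> K1\<close> K1[OF small_pair_weights_axioms]] mono[of K1]
        \<open>0 \<le> K2\<close> \<open>0 \<le> K3\<close> unfolding K_def by simp
    have moment: "\<bar>matching_moment w V l - total_weight w V ^ l\<bar> \<le> K2 / real k"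
      using K2[OF small_pair_weights_axioms order_refl] by simp
    show "\<bar>S2_error k l b bb E \<Delta>\<bar> \<le> (real k ^ 2 / E) ^ l * K / real k"
      using abs_S2_error_le[where b = b, OF E D bV(2) \<open>0 \<le> K2\<close> moment] mono[of K2]
        \<open>0 \<le> K1\<close> \<open>0 \<le> K3\<close> unfolding K_def by simp
    show "\<bar>S3_error k l b bb E \<Delta>\<bar> \<le> (real k ^ 2 / E) ^ l * K / real k"
      using abs_S3_error_le[OF E D assms bV(1) \<open>0 \<le> K3\<close> K3[OF small_pair_weights_axioms]]
        mono[of "real l * (K3 + 1)"] \<open>0 \<le> K1\<close> \<open>0 \<le> K2\<close> unfolding K_def by simp
  qed (use \<open>0 \<le> K1\<close> \<open>0 \<le> K2\<close> \<open>0 \<le> K3\<close> in \<open>simp add: K_def\<close>)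
qed

lemma Eval_bounds:
  assumes "0 < \<delta>0" "\<delta>0 \<le> \<delta>" "2 / \<delta>0\<^sup>2 \<le> real k"
  shows "0 < Eval \<delta> k" "real k ^ 2 / Eval \<delta> k \<le> 4 / \<delta>0\<^sup>2"
proof -
  have "\<delta>0\<^sup>2 * (real k)\<^sup>2 \<le> \<delta>\<^sup>2 * (real k)\<^sup>2"
    using assms(1,2) by (intro mult_right_mono power_mono) auto
  moreover have "2 \<le> \<delta>0\<^sup>2 * real k"
    using assms(1,3) by (simp add: divide_le_eq mult.commute)
  then have "2 * real k \<le> \<delta>0\<^sup>2 * (real k)\<^sup>2"
    using mult_right_mono[of 2 "\<delta>0\<^sup>2 * real k" "real k"] by (simp add: power2_eq_square mult.assoc)
  ultimately have E: "\<delta>0\<^sup>2 * (real k)\<^sup>2 / 4 + 1 \<le> Eval \<delta> k"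
    unfolding Eval_def by linarith
  then show "0 < Eval \<delta> k"
    by (smt (verit) zero_le_divide_iff zero_le_mult_iff zero_le_power2)
  with E assms(1) show "real k ^ 2 / Eval \<delta> k \<le> 4 / \<delta>0\<^sup>2"
    by (simp add: divide_le_eq field_simps)
qed

theorem proposition3p2:
  fixes \<delta>0 :: real and l :: nat
  assumes "\<delta>0 > 0" and "l \<ge> 1"
  shows "\<exists>(k0::nat) (C::real). C > 0 \<and>
    (\<forall>k \<ge> k0. \<forall>\<delta>::real. \<forall>b::nat \<Rightarrow> real. \<forall>bb::nat \<Rightarrow> nat \<Rightarrow> real.
      \<delta>0 \<le> \<delta> \<and> \<delta> < 1
      \<and> (\<forall>i\<in>{1..k}. \<bar>b i\<bar> \<le> 1)
      \<and> (\<forall>i\<in>{1..k}. \<forall>j\<in>{1..k}. i \<noteq> j \<longrightarrow> \<bar>bb i j\<bar> \<le> 1 \<and> bb i j = bb j i)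
    \<longrightarrow> Eval \<delta> k > 0 \<and>
      (\<forall>\<Delta>::real. pair_sum k bb = Eval \<delta> k * (1 + \<Delta>) \<longrightarrow>
        \<bar>fact l / Eval \<delta> k ^ l * S1 k l b bb
          - (beta k b * (1 + \<Delta>) ^ l
             - Aval k b bb / Eval \<delta> k * real l * (1 + \<Delta>) ^ (l - 1)
             - beta k b * Qval k bb / Eval \<delta> k ^ 2 * real l * (real l - 1) * (1 + \<Delta>) ^ (l - 2))\<bar>
         \<le> C / real k
      \<and> \<bar>fact l / Eval \<delta> k ^ l * S2 k l b bb - alpha b * (1 + \<Delta>) ^ l\<bar> \<le> C / real k
      \<and> \<bar>fact l / Eval \<delta> k ^ l * S3 k l b bb
          - beta k b * Wval k bb / Eval \<delta> k * real l * (1 + \<Delta>) ^ (l - 1)\<bar> \<le> C / real k))"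
proof -
  obtain K where "0 \<le> K" and K: "\<And>k bb b E \<Delta>. citizen_weights k bb \<Longrightarrow> \<forall>j\<in>{1..k}. \<bar>b j\<bar> \<le> 1 \<Longrightarrow>
    0 < E \<Longrightarrow> pair_sum k bb = E * (1 + \<Delta>) \<Longrightarrow>
      \<bar>S1_error k l b bb E \<Delta>\<bar> \<le> (real k ^ 2 / E) ^ l * K / real k
    \<and> \<bar>S2_error k l b bb E \<Delta>\<bar> \<le> (real k ^ 2 / E) ^ l * K / real k
    \<and> \<bar>S3_error k l b bb E \<Delta>\<bar> \<le> (real k ^ 2 / E) ^ l * K / real k"
    using S_errors_le[OF assms(2)] by blast
  define C where "C = (4 / \<delta>0\<^sup>2) ^ l * K + 1"
  have C_bound: "(real k ^ 2 / Eval \<delta> k) ^ l * K / real k \<le> C / real k"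
    if "0 < Eval \<delta> k" "real k ^ 2 / Eval \<delta> k \<le> 4 / \<delta>0\<^sup>2" for k \<delta>
  proof -
    have "(real k ^ 2 / Eval \<delta> k) ^ l * K \<le> (4 / \<delta>0\<^sup>2) ^ l * K"
      using that \<open>0 \<le> K\<close> by (intro mult_right_mono power_mono) auto
    then show ?thesis unfolding C_def by (intro divide_right_mono) auto
  qed
  have "0 < Eval \<delta> k \<and> (\<forall>\<Delta>. pair_sum k bb = Eval \<delta> k * (1 + \<Delta>) \<longrightarrow>
        \<bar>S1_error k l b bb (Eval \<delta> k) \<Delta>\<bar> \<le> C / real k
      \<and> \<bar>S2_error k l b bb (Eval \<delta> k) \<Delta>\<bar> \<le> C / real k
      \<and> \<bar>S3_error k l b bb (Eval \<delta> k) \<Delta>\<bar> \<le> C / real k)"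
    if "nat \<lceil>2 / \<delta>0\<^sup>2\<rceil> + 1 \<le> k" "\<delta>0 \<le> \<delta>" "\<forall>i\<in>{1..k}. \<bar>b i\<bar> \<le> 1"
      "\<forall>i\<in>{1..k}. \<forall>j\<in>{1..k}. i \<noteq> j \<longrightarrow> \<bar>bb i j\<bar> \<le> 1 \<and> bb i j = bb j i" for k \<delta> b bb
  proof -
    have k: "2 / \<delta>0\<^sup>2 \<le> real k" "1 \<le> k"
      using that(1) by linarith+
    have "citizen_weights k bb"
      using that(4) k(2) by unfold_locales
    note E = Eval_bounds[OF assms(1) that(2) k(1)]
    show ?thesis
      using K[OF \<open>citizen_weights k bb\<close> that(3) E(1)] C_bound[OF E] E(1) by (meson order_trans)
  qed
  moreover have "0 < C"
    unfolding C_def using \<open>0 \<le> K\<close> assms(1) by (simp add: add_nonneg_pos)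
  ultimately show ?thesis
    unfolding S1_error_def S2_error_def S3_error_def by blast
qed

end
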